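(* Consider the noisy graph search with Bayesian weight updates described in the context, started from uniform weights $\omega_0(v)=\frac1n$, and let $v^*$ be the target. Then for every $\tau\ge1$ and every $0<\delta<\frac12$, with probability at least $1-\delta$, $$\omega_\tau(v^* )\ge\frac{1}{n}\,\Gamma^{-\sqrt{\frac{\tau}{2}\ln\delta^{-1}}}\,2^{-H(p)\tau},$$ where $\Gamma=\frac{1-p}{p}$.
   Context: $G=(V,E)$ is a connected undirected unweighted graph with $n$ vertices and unknown target $v^*$; $0<p<\frac12$. In each step a vertex $q$ is queried (chosen adaptively); the correct answer is "yes" if $q=v^*$ and otherwise a neighbor of $q$ on a shortest path from $q$ to $v^*$; each answer is independently erroneous (arbitrary other answer) with probability $p$. Weights $\omega_t$ are updated after each answer: a vertex $v$ is compatible with a yes-answer iff $v=q$, and with a no-answer $u$ iff either $u$ lies on a shortest $q$–$v$ path, or $q$ is heavy (i.e., $\omega_{t-1}(q)\ge\frac12\sum_{w}\omega_{t-1}(w)$) and $v\ne q$; compatible vertices are multiplied by $1-p$ and the others by $p$. $H(p)=-p\log_2p-(1-p)\log_2(1-p)$. *)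

theory Defs
  imports "HOL-Probability.Probability"
begin

definition is_graph :: "'a set \<Rightarrow> ('a \<Rightarrow> 'a \<Rightarrow> bool) \<Rightarrow> bool" where
  "is_graph V E \<longleftrightarrow> finite V \<and> (\<forall>u v. E u v \<longrightarrow> u \<in> V \<and> v \<in> V \<and> E v u \<and> u \<noteq> v)"

definition walk :: "('a \<Rightarrow> 'a \<Rightarrow> bool) \<Rightarrow> 'a list \<Rightarrow> bool" where
  "walk E xs \<longleftrightarrow> xs \<noteq> [] \<and> (\<forall>i. Suc i < length xs \<longrightarrow> E (xs ! i) (xs ! Suc i))"

definition connected_graph :: "'a set \<Rightarrow> ('a \<Rightarrow> 'a \<Rightarrow> bool) \<Rightarrow> bool" where
  "connected_graph V E \<longleftrightarrow> is_graph V E \<and> V \<noteq> {} \<and>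
     (\<forall>u\<in>V. \<forall>v\<in>V. \<exists>xs. walk E xs \<and> hd xs = u \<and> last xs = v)"

definition gdist :: "('a \<Rightarrow> 'a \<Rightarrow> bool) \<Rightarrow> 'a \<Rightarrow> 'a \<Rightarrow> nat" where
  "gdist E u v = (LEAST k. \<exists>xs. walk E xs \<and> hd xs = u \<and> last xs = v \<and> length xs = Suc k)"

definition on_shortest :: "('a \<Rightarrow> 'a \<Rightarrow> bool) \<Rightarrow> 'a \<Rightarrow> 'a \<Rightarrow> 'a \<Rightarrow> bool" where
  "on_shortest E q u v \<longleftrightarrow> gdist E q u + gdist E u v = gdist E q v"

datatype 'a answer = Yes | No 'a

definition valid_answer :: "('a \<Rightarrow> 'a \<Rightarrow> bool) \<Rightarrow> 'a \<Rightarrow> 'a answer \<Rightarrow> bool" where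
  "valid_answer E q a \<longleftrightarrow> a = Yes \<or> (\<exists>u. a = No u \<and> E q u)"

definition correct_answer :: "('a \<Rightarrow> 'a \<Rightarrow> bool) \<Rightarrow> 'a \<Rightarrow> 'a \<Rightarrow> 'a answer \<Rightarrow> bool" where
  "correct_answer E t q a \<longleftrightarrow>
     (if q = t then a = Yes else (\<exists>u. a = No u \<and> E q u \<and> on_shortest E q u t))"

definition heavy :: "'a set \<Rightarrow> ('a \<Rightarrow> real) \<Rightarrow> 'a \<Rightarrow> bool" where
  "heavy V w q \<longleftrightarrow> w q \<ge> (1/2) * (\<Sum>x\<in>V. w x)"

definition compatible :: "'a set \<Rightarrow> ('a \<Rightarrow> 'a \<Rightarrow> bool) \<Rightarrow> ('a \<Rightarrow> real) \<Rightarrow> 'a \<Rightarrow> 'a answer \<Rightarrow> 'a \<Rightarrow> bool" where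
  "compatible V E w q a v \<longleftrightarrow>
     (case a of Yes \<Rightarrow> v = q
      | No u \<Rightarrow> on_shortest E q u v \<or> (heavy V w q \<and> v \<noteq> q))"

definition update :: "'a set \<Rightarrow> ('a \<Rightarrow> 'a \<Rightarrow> bool) \<Rightarrow> real \<Rightarrow> ('a \<Rightarrow> real) \<Rightarrow> 'a \<Rightarrow> 'a answer \<Rightarrow> 'a \<Rightarrow> real" where
  "update V E p w q a v = (if compatible V E w q a v then (1 - p) * w v else p * w v)"

text \<open>Q: query strategy (function of the answer transcript);
  C / W: the correct answer resp. the erroneous answer returned (chosen adaptively,
  as functions of the transcript); b t: whether the answer at step t is erroneous.\<close>
fun run :: "'a set \<Rightarrow> ('a \<Rightarrow> 'a \<Rightarrow> bool) \<Rightarrow> real \<Rightarrow> ('a answer list \<Rightarrow> 'a)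
   \<Rightarrow> ('a answer list \<Rightarrow> 'a answer) \<Rightarrow> ('a answer list \<Rightarrow> 'a answer) \<Rightarrow> (nat \<Rightarrow> bool)
   \<Rightarrow> nat \<Rightarrow> 'a answer list \<times> ('a \<Rightarrow> real)" where
  "run V E p Q C W b 0 = ([], (\<lambda>v. 1 / real (card V)))"
| "run V E p Q C W b (Suc t) =
     (let (h, w) = run V E p Q C W b t;
          q = Q h;
          a = (if b t then W h else C h)
      in (h @ [a], update V E p w q a))"

definition weight :: "'a set \<Rightarrow> ('a \<Rightarrow> 'a \<Rightarrow> bool) \<Rightarrow> real \<Rightarrow> ('a answer list \<Rightarrow> 'a)
   \<Rightarrow> ('a answer list \<Rightarrow> 'a answer) \<Rightarrow> ('a answer list \<Rightarrow> 'a answer) \<Rightarrow> (nat \<Rightarrow> bool)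
   \<Rightarrow> nat \<Rightarrow> 'a \<Rightarrow> real" where
  "weight V E p Q C W b t = snd (run V E p Q C W b t)"

definition Hb :: "real \<Rightarrow> real" where
  "Hb p = - p * log 2 p - (1 - p) * log 2 (1 - p)"

end

theory Submission
  imports Defs
begin

text \<open>The correct answer is always compatible with the target, so the target's weight is
  multiplied by \<open>1 - p\<close> after each correct answer and, as \<open>p < 1 - p\<close>, by at least \<open>p\<close>
  after each erroneous one. With \<open>k\<close> errors among \<open>\<tau>\<close> answers the weight is thus at least
  \<open>p^k (1 - p)^(\<tau> - k) / n\<close>, which equals \<open>2 powr (- H(p) \<tau>) \<Gamma> powr (p \<tau> - k) / n\<close>.
  The number of errors is binomially distributed, and by Hoeffding's inequality it exceeds
  \<open>p \<tau> + sqrt (\<tau>/2 ln (1/\<delta>))\<close> with probability at most \<open>\<delta>\<close>.\<close>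

lemma compatible_correct_answer:
  assumes "correct_answer E t q a"
  shows "compatible V E w q a t"
  using assms by (auto simp: correct_answer_def compatible_def split: if_splits)

lemma update_ge_error_factor:
  assumes "correct_answer E t q c" and "0 \<le> p" and "p \<le> 1/2" and "0 \<le> w t"
  shows "update V E p w q (if err then a else c) t \<ge> (if err then p else 1 - p) * w t"
proof (cases err)
  case True
  have "p * w t \<le> (1 - p) * w t"
    using assms by (intro mult_right_mono) auto
  with True show ?thesis by (simp add: update_def)
next
  case False
  then show ?thesis
    using compatible_correct_answer[OF assms(1)] by (simp add: update_def)
qed

lemma weight_Suc:
  "weight V E p Q C W b (Suc t) =
     (let h = fst (run V E p Q C W b t) in
      update V E p (weight V E p Q C W b t) (Q h) (if b t then W h else C h))"
  by (simp add: weight_def Let_def split: prod.split)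

lemma weight_target_ge_prod:
  assumes "\<And>h. correct_answer E vstar (Q h) (C h)" and "0 \<le> p" and "p \<le> 1/2"
  shows "weight V E p Q C W b t vstar \<ge> 1 / real (card V) * (\<Prod>i<t. if b i then p else 1 - p)"
proof (induction t)
  case 0
  then show ?case by (simp add: weight_def)
next
  case (Suc t)
  let ?w = "weight V E p Q C W b t" and ?h = "fst (run V E p Q C W b t)"
  have "0 \<le> 1 / real (card V) * (\<Prod>i<t. if b i then p else 1 - p)"
    using assms by (intro mult_nonneg_nonneg prod_nonneg) auto
  then have "0 \<le> ?w vstar"
    using Suc.IH by linarith
  have "1 / real (card V) * (\<Prod>i<Suc t. if b i then p else 1 - p)
        = (if b t then p else 1 - p) * (1 / real (card V) * (\<Prod>i<t. if b i then p else 1 - p))"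
    by (simp add: lessThan_Suc ac_simps)
  also have "\<dots> \<le> (if b t then p else 1 - p) * ?w vstar"
    using Suc.IH assms by (intro mult_left_mono) auto
  also have "\<dots> \<le> weight V E p Q C W b (Suc t) vstar"
    using update_ge_error_factor[where w = ?w, OF assms(1)[of ?h] assms(2,3) \<open>0 \<le> ?w vstar\<close>]
    by (simp add: weight_Suc Let_def)
  finally show ?case .
qed

lemma prod_if_eq_power_card:
  assumes "finite A"
  shows "(\<Prod>i\<in>A. if P i then x else y) = x ^ card {i\<in>A. P i} * y ^ (card A - card {i\<in>A. P i})"
proof -
  have "{i\<in>A. \<not> P i} = A - {i\<in>A. P i}"
    by auto
  then have "card {i\<in>A. \<not> P i} = card A - card {i\<in>A. P i}"
    using assms by (simp add: card_Diff_subset)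
  then show ?thesis
    using assms by (simp add: prod.If_cases Int_def)
qed

lemma bernoulli_word_prob_eq_entropy:
  fixes p :: real
  assumes "0 < p" and "p < 1" and "k \<le> n"
  shows "p ^ k * (1 - p) ^ (n - k) = 2 powr (- Hb p * real n) * ((1 - p) / p) powr (p * real n - real k)"
proof -
  have "ln (p ^ k * (1 - p) ^ (n - k)) = real k * ln p + (real n - real k) * ln (1 - p)"
    using assms by (simp add: ln_mult ln_realpow of_nat_diff)
  also have "\<dots> = - Hb p * real n * ln 2 + (p * real n - real k) * (ln (1 - p) - ln p)"
    by (simp add: Hb_def log_def field_simps)
  also have "\<dots> = ln (2 powr (- Hb p * real n) * ((1 - p) / p) powr (p * real n - real k))"
    using assms by (simp add: ln_mult ln_powr ln_div)
  finally show ?thesis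
    using assms by simp
qed

lemma weight_target_ge_entropy:
  assumes "\<And>h. correct_answer E vstar (Q h) (C h)" and "0 < p" and "p < 1/2"
  shows "weight V E p Q C W b t vstar \<ge>
           1 / real (card V) * 2 powr (- Hb p * real t)
             * ((1 - p) / p) powr (p * real t - real (card {i\<in>{..<t}. b i}))"
proof -
  have "card {i\<in>{..<t}. b i} \<le> t"
    using card_mono[of "{..<t}" "{i\<in>{..<t}. b i}"] by auto
  then have "(\<Prod>i<t. if b i then p else 1 - p) =
      2 powr (- Hb p * real t) * ((1 - p) / p) powr (p * real t - real (card {i\<in>{..<t}. b i}))"
    using assms by (simp add: prod_if_eq_power_card bernoulli_word_prob_eq_entropy)
  moreover have "1 / real (card V) * (\<Prod>i<t. if b i then p else 1 - p) \<le> weight V E p Q C W b t vstar"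
    by (rule weight_target_ge_prod) (use assms in auto)
  ultimately show ?thesis
    by (simp add: mult.assoc)
qed

lemma prob_count_true_ge_le:
  assumes "0 \<le> p" and "p \<le> 1" and "n > 0" and "0 < \<delta>" and "\<delta> \<le> 1"
  shows "measure_pmf.prob (Pi_pmf {..<n} False (\<lambda>_. bernoulli_pmf p))
           {b. real n * p + sqrt (real n / 2 * ln (1 / \<delta>)) \<le> real (card {i\<in>{..<n}. b i})} \<le> \<delta>"
proof -
  define s where "s = sqrt (real n / 2 * ln (1 / \<delta>))"
  have "0 \<le> ln (1 / \<delta>)"
    using assms by simp
  then have "s \<ge> 0" and "2 * s\<^sup>2 / real n = ln (1 / \<delta>)"
    using assms by (simp_all add: s_def)
  have "binomial_pmf n p = map_pmf (\<lambda>b. card {i\<in>{..<n}. b i}) (Pi_pmf {..<n} False (\<lambda>_. bernoulli_pmf p))"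
    by (rule binomial_pmf_altdef') (use assms in auto)
  then have "measure_pmf.prob (Pi_pmf {..<n} False (\<lambda>_. bernoulli_pmf p))
               {b. real n * p + s \<le> real (card {i\<in>{..<n}. b i})}
             = measure_pmf.prob (binomial_pmf n p) {k. real n * p + s \<le> real k}"
    by simp
  also have "\<dots> \<le> exp (- 2 * s\<^sup>2 / real n)"
    by (rule binomial_distribution.prob_ge)
       (use assms \<open>s \<ge> 0\<close> in \<open>auto simp: binomial_distribution_def\<close>)
  also have "\<dots> = \<delta>"
    using assms \<open>2 * s\<^sup>2 / real n = ln (1 / \<delta>)\<close> by (simp add: ln_div)
  finally show ?thesis
    by (simp add: s_def)
qed

lemma weight_target_ge_if_few_errors:
  assumes "\<And>h. correct_answer E vstar (Q h) (C h)" and "0 < p" and "p < 1/2"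
    and "real (card {i\<in>{..<t}. b i}) \<le> real t * p + s"
  shows "weight V E p Q C W b t vstar \<ge>
           1 / real (card V) * ((1 - p) / p) powr (- s) * 2 powr (- Hb p * real t)"
proof -
  let ?c = "1 / real (card V) * 2 powr (- Hb p * real t)"
  have "((1 - p) / p) powr (- s) \<le> ((1 - p) / p) powr (p * real t - real (card {i\<in>{..<t}. b i}))"
    using assms by (intro powr_mono) (auto simp: field_simps)
  then have "?c * ((1 - p) / p) powr (- s)
      \<le> ?c * ((1 - p) / p) powr (p * real t - real (card {i\<in>{..<t}. b i}))"
    by (rule mult_left_mono) simp
  also have "\<dots> \<le> weight V E p Q C W b t vstar"
    by (rule weight_target_ge_entropy) (use assms in auto)
  finally show ?thesis
    by (simp only: ac_simps)
qed

theorem lemma6: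
  fixes V :: "'a set" and E :: "'a \<Rightarrow> 'a \<Rightarrow> bool" and p \<delta> :: real and \<tau> :: nat
    and vstar :: 'a and Q :: "'a answer list \<Rightarrow> 'a"
    and C W :: "'a answer list \<Rightarrow> 'a answer"
  assumes "connected_graph V E"
    and "vstar \<in> V"
    and "0 < p" and "p < 1/2"
    and "\<And>h. Q h \<in> V"
    and "\<And>h. correct_answer E vstar (Q h) (C h)"
    and "\<And>h. valid_answer E (Q h) (W h) \<and> W h \<noteq> C h"
    and "\<tau> \<ge> 1"
    and "0 < \<delta>" and "\<delta> < 1/2"
  shows "measure_pmf.prob (Pi_pmf {..<\<tau>} False (\<lambda>_. bernoulli_pmf p))
           {b. weight V E p Q C W b \<tau> vstar \<ge>
               (1 / real (card V)) * ((1 - p) / p) powr (- sqrt (real \<tau> / 2 * ln (1 / \<delta>)))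
                 * 2 powr (- Hb p * real \<tau>)}
         \<ge> 1 - \<delta>"
proof -
  define M where "M = Pi_pmf {..<\<tau>} False (\<lambda>_. bernoulli_pmf p)"
  define s where "s = sqrt (real \<tau> / 2 * ln (1 / \<delta>))"
  define many_errors where "many_errors = {b. real \<tau> * p + s \<le> real (card {i\<in>{..<\<tau>}. b i})}"
  have "1 - \<delta> \<le> measure_pmf.prob M (UNIV - many_errors)"
    using prob_count_true_ge_le[of p \<tau> \<delta>] assms measure_pmf.prob_compl[of many_errors M]
    by (simp add: M_def s_def many_errors_def)
  also have "\<dots> \<le> measure_pmf.prob M {b. weight V E p Q C W b \<tau> vstar \<ge>
                   1 / real (card V) * ((1 - p) / p) powr (- s) * 2 powr (- Hb p * real \<tau>)}"
    using weight_target_ge_if_few_errors[OF assms(6,3,4)]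
    by (intro measure_pmf.finite_measure_mono) (auto simp: many_errors_def)
  finally show ?thesis
    by (simp add: M_def s_def)
qed

end
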